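(* Let $\ell$ be a prime, $\nu\ge 1$, and $R$ a $\mathbb{Z}/\ell^\nu$-algebra. Let $L$ be the free $R$-module on symbols $\alpha_1,\dots,\alpha_{\ell-1}$, and for $k\ge0$ let $\phi_k:L\to H_R$ be the $R$-linear map with $\phi_k(\alpha_i)=\alpha_{k\ell+i}$. Then $\bigoplus_k\phi_k:\bigoplus_{k=0}^\infty L\to H_R$ is an isomorphism of $R$-modules. In particular, the elements $\alpha_n$ with $n>0$ and $n\not\equiv0\pmod\ell$ form an $R$-basis of $H_R$.
   Context: $F\subseteq\mathbb{Q}[t]$ is the ring of numerical polynomials (those $f$ with $f(n)\in\mathbb{Z}$ for all integers $n\gg0$), free abelian on $\alpha_n=\binom tn$, $n\ge0$. $F_R=R\otimes F$ is the free $R$-module on the $\alpha_n$, and $T:F_R\to F_R$ (multiplication by $t$) is given by $T(\alpha_n)=n\alpha_n+(n+1)\alpha_{n+1}$. $H_R$ denotes the colimit of $F_R\xrightarrow{T}F_R\xrightarrow{T}F_R\to\cdots$, i.e. $H_R=F_R[1/t]=R\otimes H$ with $H=F[1/t]$; $\alpha_n$ also denotes the image in $H_R$ of the basis element $\alpha_n$ of the first copy of $F_R$. *)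

theory Defs
  imports Main "HOL-Computational_Algebra.Primes"
begin

text \<open>Elements of F_R are represented by their coefficient sequences with respect
  to the basis alpha_n = (t choose n): finitely supported functions nat => R.\<close>

definition FR :: "(nat \<Rightarrow> 'a::comm_ring_1) set" where
  "FR = {f. finite {n. f n \<noteq> 0}}"

text \<open>Multiplication by t: T(alpha_n) = n alpha_n + (n+1) alpha_(n+1),
  so the coefficient of alpha_n in T f is n f(n) + n f(n-1).\<close>

definition Tmap :: "(nat \<Rightarrow> 'a::comm_ring_1) \<Rightarrow> nat \<Rightarrow> 'a" where
  "Tmap f n = of_nat n * f n + (if n = 0 then 0 else of_nat n * f (n - 1))"

text \<open>The colimit H_R of F_R --T--> F_R --T--> ... : an element is represented by
  a pair (k, f) meaning f in the k-th copy; (k,f) ~ (j,g) iff they agree after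
  pushing both forward to some common later copy.\<close>

definition colim_rel :: "((nat \<times> (nat \<Rightarrow> 'a::comm_ring_1)) \<times> (nat \<times> (nat \<Rightarrow> 'a))) set" where
  "colim_rel = {((k, f), (j, g)). f \<in> FR \<and> g \<in> FR \<and>
      (\<exists>m. k \<le> m \<and> j \<le> m \<and> (Tmap ^^ (m - k)) f = (Tmap ^^ (m - j)) g)}"

definition HR :: "(nat \<times> (nat \<Rightarrow> 'a::comm_ring_1)) set set" where
  "HR = (UNIV \<times> FR) // colim_rel"

definition hclass :: "nat \<Rightarrow> (nat \<Rightarrow> 'a::comm_ring_1) \<Rightarrow> (nat \<times> (nat \<Rightarrow> 'a)) set" where
  "hclass k f = colim_rel `` {(k, f)}"

definition hadd :: "(nat \<times> (nat \<Rightarrow> 'a::comm_ring_1)) set \<Rightarrow> (nat \<times> (nat \<Rightarrow> 'a)) set \<Rightarrow> (nat \<times> (nat \<Rightarrow> 'a)) set" where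
  "hadd X Y = \<Union>{hclass (max k j) (\<lambda>n. (Tmap ^^ (max k j - k)) f n + (Tmap ^^ (max k j - j)) g n)
      | k f j g. (k, f) \<in> X \<and> (j, g) \<in> Y}"

definition hscale :: "'a::comm_ring_1 \<Rightarrow> (nat \<times> (nat \<Rightarrow> 'a)) set \<Rightarrow> (nat \<times> (nat \<Rightarrow> 'a)) set" where
  "hscale r X = \<Union>{hclass k (\<lambda>n. r * f n) | k f. (k, f) \<in> X}"

definition Lmod :: "nat \<Rightarrow> (nat \<Rightarrow> 'a::comm_ring_1) set" where
  "Lmod l = {v. \<forall>i. v i \<noteq> 0 \<longrightarrow> 1 \<le> i \<and> i \<le> l - 1}"

text \<open>phi_k(alpha_i) = alpha_(k l + i), first on the level of F_R, then into H_R
  via the structure map of the first copy.\<close>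

definition phiF :: "nat \<Rightarrow> nat \<Rightarrow> (nat \<Rightarrow> 'a::comm_ring_1) \<Rightarrow> nat \<Rightarrow> 'a" where
  "phiF l k v n = (if k * l < n \<and> n < (k + 1) * l then v (n - k * l) else 0)"

definition phi :: "nat \<Rightarrow> nat \<Rightarrow> (nat \<Rightarrow> 'a::comm_ring_1) \<Rightarrow> (nat \<times> (nat \<Rightarrow> 'a)) set" where
  "phi l k v = hclass 0 (phiF l k v)"

definition DSum :: "nat \<Rightarrow> (nat \<Rightarrow> nat \<Rightarrow> 'a::comm_ring_1) set" where
  "DSum l = {c. (\<forall>k. c k \<in> Lmod l) \<and> finite {k. c k \<noteq> (\<lambda>_. 0)}}"

definition Phi :: "nat \<Rightarrow> (nat \<Rightarrow> nat \<Rightarrow> 'a::comm_ring_1) \<Rightarrow> (nat \<times> (nat \<Rightarrow> 'a)) set" where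
  "Phi l c = hclass 0 (\<lambda>n. \<Sum>k\<in>{k. c k \<noteq> (\<lambda>_. 0)}. phiF l k (c k) n)"

end

theory Submission
  imports Defs
begin

text \<open>Every element of \<open>H\<^sub>R\<close> has a unique representative in the first copy of \<open>F\<^sub>R\<close> that is
  supported on the \<open>\<alpha>\<^sub>n\<close> with \<open>n > 0\<close> and \<open>\<not> l dvd n\<close>. Uniqueness: the lowest nonzero
  coefficient of such an element sits at some \<open>N\<close> prime to \<open>l\<close>, and \<open>T\<^sup>m\<close> multiplies it by the
  unit \<open>N\<^sup>m\<close>. Existence: \<open>T\<close> acts on coefficients by \<open>(T a)\<^sub>n = n (a\<^sub>n + a\<^sub>n\<^sub>-\<^sub>1)\<close>, which can
  be inverted away from the multiples of \<open>l\<close>, so every \<open>T\<^sup>k g\<close> agrees with some \<open>T\<^sup>N a\<close> of the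
  above shape up to an error divisible by \<open>l\<close>; as \<open>l\<close> is nilpotent in \<open>R\<close>, treating the error in
  the same way terminates. Grouping the indices \<open>n\<close> with \<open>\<not> l dvd n\<close> into the blocks
  \<open>k l + 1, \<dots>, k l + l - 1\<close> gives the decomposition into the images of the \<open>\<phi>\<^sub>k\<close>.\<close>

lemma Tmap_add: "Tmap (\<lambda>n. f n + g n) = (\<lambda>n. Tmap f n + Tmap g n)"
  by (auto simp: Tmap_def fun_eq_iff algebra_simps)

lemma Tmap_diff: "Tmap (\<lambda>n. f n - g n) = (\<lambda>n. Tmap f n - Tmap g n)"
  by (auto simp: Tmap_def fun_eq_iff algebra_simps)

lemma Tmap_mult: "Tmap (\<lambda>n. r * f n) = (\<lambda>n. r * Tmap f n)"
  by (auto simp: Tmap_def fun_eq_iff algebra_simps)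

lemma funpow_Tmap_add: "(Tmap ^^ m) (\<lambda>n. f n + g n) = (\<lambda>n. (Tmap ^^ m) f n + (Tmap ^^ m) g n)"
  by (induction m) (simp_all add: Tmap_add)

lemma funpow_Tmap_diff: "(Tmap ^^ m) (\<lambda>n. f n - g n) = (\<lambda>n. (Tmap ^^ m) f n - (Tmap ^^ m) g n)"
  by (induction m) (simp_all add: Tmap_diff)

lemma funpow_Tmap_mult: "(Tmap ^^ m) (\<lambda>n. r * f n) = (\<lambda>n. r * (Tmap ^^ m) f n)"
  by (induction m) (simp_all add: Tmap_mult)

lemma funpow_Tmap_zero: "(Tmap ^^ m) (\<lambda>n. 0) = (\<lambda>n. 0)"
  using funpow_Tmap_mult[of m 0 "\<lambda>n. 0"] by simp

lemma funpow_diff_split: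
  fixes F :: "'a \<Rightarrow> 'a"
  assumes "k \<le> j" "j \<le> m"
  shows "(F ^^ (m - k)) x = (F ^^ (m - j)) ((F ^^ (j - k)) x)"
proof -
  have "m - k = (m - j) + (j - k)" using assms by arith
  then show ?thesis by (simp add: funpow_add)
qed

lemma funpow_diff_eq_mono:
  fixes F :: "'a \<Rightarrow> 'a"
  assumes "k \<le> m" "j \<le> m" "m \<le> m'" and eq: "(F ^^ (m - k)) x = (F ^^ (m - j)) y"
  shows "(F ^^ (m' - k)) x = (F ^^ (m' - j)) y"
proof -
  have "(F ^^ (m' - k)) x = (F ^^ (m' - m)) ((F ^^ (m - k)) x)"
    using assms by (intro funpow_diff_split) auto
  also have "\<dots> = (F ^^ (m' - m)) ((F ^^ (m - j)) y)" using eq by simp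
  also have "\<dots> = (F ^^ (m' - j)) y"
    using assms by (intro funpow_diff_split[symmetric]) auto
  finally show ?thesis .
qed

lemma Tmap_lowest_coeff:
  assumes "0 < N" "\<forall>n<N. f n = 0"
  shows "(\<forall>n<N. Tmap f n = 0) \<and> Tmap f N = of_nat N * f N"
  using assms by (auto simp: Tmap_def)

lemma funpow_Tmap_lowest_coeff:
  assumes "0 < N" "\<forall>n<N. f n = 0"
  shows "(\<forall>n<N. (Tmap ^^ k) f n = 0) \<and> (Tmap ^^ k) f N = of_nat N ^ k * f N"
proof (induction k)
  case 0
  then show ?case using assms(2) by simp
next
  case (Suc k)
  then show ?case using Tmap_lowest_coeff[OF assms(1), of "(Tmap ^^ k) f"] by simp
qed

lemma FR_add: "f \<in> FR \<Longrightarrow> g \<in> FR \<Longrightarrow> (\<lambda>n. f n + g n) \<in> FR"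
  unfolding FR_def by (auto intro: rev_finite_subset[of "{n. f n \<noteq> 0} \<union> {n. g n \<noteq> 0}"])

lemma FR_diff: "f \<in> FR \<Longrightarrow> g \<in> FR \<Longrightarrow> (\<lambda>n. f n - g n) \<in> FR"
  unfolding FR_def by (auto intro: rev_finite_subset[of "{n. f n \<noteq> 0} \<union> {n. g n \<noteq> 0}"])

lemma FR_mult: "f \<in> FR \<Longrightarrow> (\<lambda>n. r * f n) \<in> FR"
  unfolding FR_def by (auto intro: rev_finite_subset[of "{n. f n \<noteq> 0}"])

lemma Tmap_in_FR:
  assumes "f \<in> FR"
  shows "Tmap f \<in> FR"
proof -
  have "{n. Tmap f n \<noteq> 0} \<subseteq> {n. f n \<noteq> 0} \<union> Suc ` {n. f n \<noteq> 0}"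
  proof
    fix n assume "n \<in> {n. Tmap f n \<noteq> 0}"
    then have "f n \<noteq> 0 \<or> (n \<noteq> 0 \<and> f (n - 1) \<noteq> 0)"
      by (auto simp: Tmap_def split: if_splits)
    then show "n \<in> {n. f n \<noteq> 0} \<union> Suc ` {n. f n \<noteq> 0}" by (cases n) auto
  qed
  then show ?thesis using assms unfolding FR_def by (auto intro: finite_subset)
qed

lemma FR_shift:
  assumes "f \<in> FR"
  shows "(\<lambda>n. if P n then c n * f (n - 1) else 0) \<in> FR"
proof -
  have "{n. (if P n then c n * f (n - 1) else 0) \<noteq> 0} \<subseteq> insert 0 (Suc ` {n. f n \<noteq> 0})"
  proof
    fix n assume "n \<in> {n. (if P n then c n * f (n - 1) else 0) \<noteq> 0}"
    then have "f (n - 1) \<noteq> 0" by (auto split: if_splits)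
    then show "n \<in> insert 0 (Suc ` {n. f n \<noteq> 0})" by (cases n) auto
  qed
  moreover have "finite (insert 0 (Suc ` {n. f n \<noteq> 0}))" using assms by (simp add: FR_def)
  ultimately show ?thesis unfolding FR_def mem_Collect_eq by (rule finite_subset)
qed

lemma funpow_Tmap_in_FR: "f \<in> FR \<Longrightarrow> (Tmap ^^ m) f \<in> FR"
  by (induction m) (auto intro: Tmap_in_FR)

lemma equiv_colim_rel: "equiv (UNIV \<times> FR) colim_rel"
proof (rule equivI)
  show "refl_on (UNIV \<times> FR) colim_rel" "sym colim_rel"
    unfolding refl_on_def sym_def colim_rel_def by auto
  show "colim_rel \<subseteq> (UNIV \<times> FR) \<times> (UNIV \<times> FR)"
    by (auto simp: colim_rel_def)
  show "trans (colim_rel :: ((nat \<times> (nat \<Rightarrow> 'a::comm_ring_1)) \<times> _) set)"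
  proof (rule transI)
    fix x y z :: "nat \<times> (nat \<Rightarrow> 'a)"
    assume xy: "(x, y) \<in> colim_rel" and yz: "(y, z) \<in> colim_rel"
    obtain k f j g i h where xyz: "x = (k, f)" "y = (j, g)" "z = (i, h)"
      by (cases x, cases y, cases z) auto
    from xy obtain m1 where fg: "f \<in> FR" "g \<in> FR"
      and m1: "k \<le> m1" "j \<le> m1" "(Tmap ^^ (m1 - k)) f = (Tmap ^^ (m1 - j)) g"
      unfolding xyz colim_rel_def by auto
    from yz obtain m2 where h: "h \<in> FR"
      and m2: "j \<le> m2" "i \<le> m2" "(Tmap ^^ (m2 - j)) g = (Tmap ^^ (m2 - i)) h"
      unfolding xyz colim_rel_def by auto
    have "(Tmap ^^ (m1 + m2 - k)) f = (Tmap ^^ (m1 + m2 - j)) g"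
      by (rule funpow_diff_eq_mono[OF m1(1,2) _ m1(3)]) simp
    also have "\<dots> = (Tmap ^^ (m1 + m2 - i)) h"
      by (rule funpow_diff_eq_mono[OF m2(1,2) _ m2(3)]) simp
    finally have "(Tmap ^^ (m1 + m2 - k)) f = (Tmap ^^ (m1 + m2 - i)) h" .
    moreover have "k \<le> m1 + m2" "i \<le> m1 + m2" using m1 m2 by auto
    ultimately show "(x, z) \<in> colim_rel"
      unfolding xyz colim_rel_def using fg h by blast
  qed
qed

lemma hclass_eq_iff:
  assumes "f \<in> FR" "g \<in> FR"
  shows "hclass k f = hclass j g \<longleftrightarrow>
    (\<exists>m. k \<le> m \<and> j \<le> m \<and> (Tmap ^^ (m - k)) f = (Tmap ^^ (m - j)) g)"
proof -
  have "hclass k f = hclass j g \<longleftrightarrow> ((k, f), (j, g)) \<in> colim_rel"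
    unfolding hclass_def using assms by (intro eq_equiv_class_iff[OF equiv_colim_rel]) auto
  then show ?thesis using assms by (simp add: colim_rel_def)
qed

lemma hclass_in_HR: "f \<in> FR \<Longrightarrow> hclass k f \<in> HR"
  unfolding hclass_def HR_def by (rule quotientI) simp

lemma HR_cases:
  assumes "X \<in> HR"
  obtains j g where "g \<in> FR" "X = hclass j g"
  using assms unfolding HR_def hclass_def by (auto elim!: quotientE)

lemma self_in_hclass: "f \<in> FR \<Longrightarrow> (k, f) \<in> hclass k f"
  by (auto simp: hclass_def colim_rel_def)

lemma hclass_eq_if_mem:
  assumes "(j, g) \<in> hclass k f"
  shows "g \<in> FR \<and> hclass j g = hclass k f"
  using assms equiv_class_eq[OF equiv_colim_rel, of "(k, f)" "(j, g)"]
  unfolding hclass_def by (auto simp: colim_rel_def)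

lemma hclass_add:
  assumes "x \<in> FR" "y \<in> FR" "f \<in> FR" "g \<in> FR"
    and fx: "hclass k f = hclass 0 x" and gy: "hclass j g = hclass 0 y"
  shows "hclass (max k j) (\<lambda>n. (Tmap ^^ (max k j - k)) f n + (Tmap ^^ (max k j - j)) g n)
    = hclass 0 (\<lambda>n. x n + y n)"
proof -
  from fx obtain m1 where m1: "k \<le> m1" "(Tmap ^^ (m1 - k)) f = (Tmap ^^ (m1 - 0)) x"
    using assms hclass_eq_iff by blast
  from gy obtain m2 where m2: "j \<le> m2" "(Tmap ^^ (m2 - j)) g = (Tmap ^^ (m2 - 0)) y"
    using assms hclass_eq_iff by blast
  define M where "M = max k j"
  define m where "m = max m1 m2"
  have "M \<le> m" using m1 m2 by (auto simp: M_def m_def)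
  have "(Tmap ^^ (m - k)) f = (Tmap ^^ (m - 0)) x"
    by (rule funpow_diff_eq_mono[OF m1(1) _ _ m1(2)]) (auto simp: m_def)
  moreover have "(Tmap ^^ (m - j)) g = (Tmap ^^ (m - 0)) y"
    by (rule funpow_diff_eq_mono[OF m2(1) _ _ m2(2)]) (auto simp: m_def)
  moreover have "(Tmap ^^ (m - M)) ((Tmap ^^ (M - k)) f) = (Tmap ^^ (m - k)) f"
    "(Tmap ^^ (m - M)) ((Tmap ^^ (M - j)) g) = (Tmap ^^ (m - j)) g"
    using \<open>M \<le> m\<close> by (auto simp: M_def intro!: funpow_diff_split[symmetric])
  ultimately have "(Tmap ^^ (m - M)) (\<lambda>n. (Tmap ^^ (M - k)) f n + (Tmap ^^ (M - j)) g n)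
      = (Tmap ^^ (m - 0)) (\<lambda>n. x n + y n)"
    by (simp add: funpow_Tmap_add)
  moreover have "(\<lambda>n. (Tmap ^^ (M - k)) f n + (Tmap ^^ (M - j)) g n) \<in> FR"
    "(\<lambda>n. x n + y n) \<in> FR"
    using assms by (auto intro!: FR_add funpow_Tmap_in_FR)
  ultimately show ?thesis unfolding M_def[symmetric] using \<open>M \<le> m\<close>
    by (subst hclass_eq_iff) blast+
qed

lemma hadd_hclass:
  assumes "x \<in> FR" "y \<in> FR"
  shows "hadd (hclass 0 x) (hclass 0 y) = hclass 0 (\<lambda>n. x n + y n)"
proof -
  have "{hclass (max k j) (\<lambda>n. (Tmap ^^ (max k j - k)) f n + (Tmap ^^ (max k j - j)) g n)
      | k f j g. (k, f) \<in> hclass 0 x \<and> (j, g) \<in> hclass 0 y} = {hclass 0 (\<lambda>n. x n + y n)}"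
  proof (intro equalityI subsetI)
    fix X assume "X \<in> {hclass (max k j) (\<lambda>n. (Tmap ^^ (max k j - k)) f n + (Tmap ^^ (max k j - j)) g n)
      | k f j g. (k, f) \<in> hclass 0 x \<and> (j, g) \<in> hclass 0 y}"
    then obtain k f j g where "(k, f) \<in> hclass 0 x" "(j, g) \<in> hclass 0 y"
      and X: "X = hclass (max k j) (\<lambda>n. (Tmap ^^ (max k j - k)) f n + (Tmap ^^ (max k j - j)) g n)"
      by blast
    then have "f \<in> FR" "hclass k f = hclass 0 x" "g \<in> FR" "hclass j g = hclass 0 y"
      by (simp_all add: hclass_eq_if_mem)
    then show "X \<in> {hclass 0 (\<lambda>n. x n + y n)}"
      using hclass_add[OF assms] X by simp
  next
    fix X assume "X \<in> {hclass 0 (\<lambda>n. x n + y n)}"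
    then have "X = hclass (max 0 0) (\<lambda>n. (Tmap ^^ (max 0 0 - 0)) x n + (Tmap ^^ (max 0 0 - 0)) y n)"
      by simp
    then show "X \<in> {hclass (max k j) (\<lambda>n. (Tmap ^^ (max k j - k)) f n + (Tmap ^^ (max k j - j)) g n)
      | k f j g. (k, f) \<in> hclass 0 x \<and> (j, g) \<in> hclass 0 y}"
      using self_in_hclass[OF assms(1), of 0] self_in_hclass[OF assms(2), of 0] by blast
  qed
  then show ?thesis unfolding hadd_def by simp
qed

lemma hscale_hclass:
  assumes "x \<in> FR"
  shows "hscale r (hclass 0 x) = hclass 0 (\<lambda>n. r * x n)"
proof -
  have "hclass k (\<lambda>n. r * f n) = hclass 0 (\<lambda>n. r * x n)" if "(k, f) \<in> hclass 0 x" for k f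
  proof -
    from that have f: "f \<in> FR" and "hclass k f = hclass 0 x" by (simp_all add: hclass_eq_if_mem)
    then obtain m where "k \<le> m" "(Tmap ^^ (m - k)) f = (Tmap ^^ (m - 0)) x"
      using assms hclass_eq_iff by blast
    then show ?thesis using assms f
      by (subst hclass_eq_iff) (auto intro: FR_mult intro!: exI[of _ m] simp: funpow_Tmap_mult)
  qed
  then have "{hclass k (\<lambda>n. r * f n) | k f. (k, f) \<in> hclass 0 x} = {hclass 0 (\<lambda>n. r * x n)}"
    using self_in_hclass[OF assms] by blast
  then show ?thesis unfolding hscale_def by simp
qed

lemma of_nat_invertible_if_coprime:
  assumes "coprime n m" and "(of_nat m :: 'a::comm_ring_1) = 0"
  shows "\<exists>u::'a. u * of_nat n = 1"
proof -
  obtain u v where "u * int n + v * int m = gcd (int n) (int m)"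
    using bezout_int by blast
  with assms(1) have "u * int n + v * int m = 1" by simp
  then have "(of_int (u * int n + v * int m) :: 'a) = 1" by simp
  then have "(of_int u * of_nat n + of_int v * of_nat m :: 'a) = 1" by simp
  with assms(2) show ?thesis by auto
qed

text \<open>An arbitrary value unless \<open>of_nat n\<close> is a unit.\<close>

definition nat_inverse :: "nat \<Rightarrow> 'a::comm_ring_1" where
  "nat_inverse n = (SOME u. u * of_nat n = 1)"

lemma nat_inverse_mult:
  "\<exists>u::'a::comm_ring_1. u * of_nat n = 1 \<Longrightarrow> nat_inverse n * (of_nat n :: 'a) = 1"
  unfolding nat_inverse_def by (rule someI_ex)

definition Vspan :: "nat \<Rightarrow> (nat \<Rightarrow> 'a::comm_ring_1) set" where
  "Vspan l = {a. finite {n. a n \<noteq> 0} \<and> (\<forall>n. a n \<noteq> 0 \<longrightarrow> 0 < n \<and> \<not> l dvd n)}"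

lemma Vspan_iff: "a \<in> Vspan l \<longleftrightarrow> a \<in> FR \<and> (\<forall>n. n = 0 \<or> l dvd n \<longrightarrow> a n = 0)"
proof -
  have "(a n \<noteq> 0 \<longrightarrow> 0 < n \<and> \<not> l dvd n) \<longleftrightarrow> (n = 0 \<or> l dvd n \<longrightarrow> a n = 0)" for n
    by (cases n) auto
  then show ?thesis unfolding Vspan_def FR_def by simp
qed

lemma Vspan_subset_FR: "Vspan l \<subseteq> FR"
  by (auto simp: Vspan_iff)

lemma Vspan_zero: "(\<lambda>n. 0) \<in> Vspan l"
  by (simp add: Vspan_def)

lemma Vspan_add: "a \<in> Vspan l \<Longrightarrow> b \<in> Vspan l \<Longrightarrow> (\<lambda>n. a n + b n) \<in> Vspan l"
  by (simp add: Vspan_iff FR_add)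

lemma Vspan_diff: "a \<in> Vspan l \<Longrightarrow> b \<in> Vspan l \<Longrightarrow> (\<lambda>n. a n - b n) \<in> Vspan l"
  by (simp add: Vspan_iff FR_diff)

lemma Vspan_mult: "a \<in> Vspan l \<Longrightarrow> (\<lambda>n. r * a n) \<in> Vspan l"
  by (simp add: Vspan_iff FR_mult)

text \<open>Since \<open>Tmap a n = n * (a n + a (n - 1))\<close>, solving \<open>Tmap a = v\<close> off the multiples of \<open>l\<close>
  gives the recursion below; restarting from \<open>0\<close> at every multiple of \<open>l\<close> keeps the support
  finite and leaves an error \<open>n * a (n - 1) \<in> l R\<close> at the multiples \<open>n\<close> of \<open>l\<close>.\<close>

fun Tlift :: "nat \<Rightarrow> (nat \<Rightarrow> 'a::comm_ring_1) \<Rightarrow> nat \<Rightarrow> 'a" where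
  "Tlift l v 0 = 0"
| "Tlift l v (Suc n) = (if l dvd Suc n then 0 else nat_inverse (Suc n) * v (Suc n) - Tlift l v n)"

lemma Tlift_eq_0_if_dvd: "l dvd n \<Longrightarrow> Tlift l v n = 0"
  by (cases n) auto

lemma Tlift_in_Vspan:
  assumes "0 < l" and "v \<in> FR"
  shows "Tlift l v \<in> Vspan l"
proof -
  obtain K where K: "\<And>n. v n \<noteq> 0 \<Longrightarrow> n < K"
    using assms(2) by (auto simp: FR_def finite_nat_set_iff_bounded)
  have "K \<le> l * K" using assms(1) by simp
  have beyond: "Tlift l v (l * K + d) = 0" for d
  proof (induction d)
    case 0
    then show ?case by (simp add: Tlift_eq_0_if_dvd)
  next
    case (Suc d)
    have "v (Suc (l * K + d)) = 0"
      using K[of "Suc (l * K + d)"] \<open>K \<le> l * K\<close> by linarith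
    then show ?case using Suc by simp
  qed
  have "{n. Tlift l v n \<noteq> 0} \<subseteq> {..<l * K}"
  proof
    fix n assume "n \<in> {n. Tlift l v n \<noteq> 0}"
    then show "n \<in> {..<l * K}" using beyond[of "n - l * K"] by (cases "l * K \<le> n") auto
  qed
  then have "finite {n. Tlift l v n \<noteq> 0}" by (rule finite_subset) simp
  moreover have "0 < n \<and> \<not> l dvd n" if "Tlift l v n \<noteq> 0" for n
    using that by (cases n) (auto simp: Tlift_eq_0_if_dvd)
  ultimately show ?thesis by (simp add: Vspan_def)
qed

context
  fixes l \<nu> :: nat
  assumes l_prime: "prime l" and l_power_eq_0: "(of_nat (l ^ \<nu>) :: 'a::comm_ring_1) = 0"
begin

lemma nat_inverse_mult_if_not_dvd:
  assumes "\<not> l dvd n"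
  shows "nat_inverse n * (of_nat n :: 'a) = 1"
proof (rule nat_inverse_mult, rule of_nat_invertible_if_coprime)
  show "coprime n (l ^ \<nu>)"
    using assms l_prime by (simp add: prime_imp_coprime coprime_commute)
qed (fact l_power_eq_0)

lemma Tmap_Tlift:
  "Tmap (Tlift l (v :: nat \<Rightarrow> 'a)) n = (if l dvd n then of_nat n * Tlift l v (n - 1) else v n)"
proof (cases n)
  case (Suc m)
  show ?thesis
  proof (cases "l dvd n")
    case True
    then show ?thesis using Suc by (simp add: Tmap_def Tlift_eq_0_if_dvd)
  next
    case False
    then have "Tmap (Tlift l v) n
        = of_nat n * (nat_inverse n * v n - Tlift l v m) + of_nat n * Tlift l v m"
      using Suc by (simp add: Tmap_def)
    also have "\<dots> = (nat_inverse n * of_nat n) * v n" by (simp add: algebra_simps)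
    also have "\<dots> = v n" using nat_inverse_mult_if_not_dvd[OF False] by simp
    finally show ?thesis using False by simp
  qed
qed (simp add: Tmap_def)

lemma Vspan_eq_Tmap_mod_l:
  assumes v: "(v :: nat \<Rightarrow> 'a) \<in> Vspan l"
  shows "\<exists>a\<in>Vspan l. \<exists>w\<in>FR. v = (\<lambda>n. Tmap a n + of_nat l * w n)"
proof (intro bexI)
  define a where "a = Tlift l v"
  define w where "w = (\<lambda>n. if l dvd n then - of_nat (n div l) * a (n - 1) else (0::'a))"
  show "a \<in> Vspan l"
    unfolding a_def using l_prime v Vspan_subset_FR by (auto intro: Tlift_in_Vspan prime_gt_0_nat)
  then have "a \<in> FR" using Vspan_subset_FR by blast
  then show "w \<in> FR" unfolding w_def by (rule FR_shift)
  have "v n = Tmap a n + of_nat l * w n" for n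
  proof (cases "l dvd n")
    case True
    then have "(of_nat n :: 'a) = of_nat l * of_nat (n div l)"
      by (metis dvd_mult_div_cancel of_nat_mult)
    then have "Tmap a n = of_nat l * of_nat (n div l) * a (n - 1)"
      using True by (simp add: a_def Tmap_Tlift)
    moreover have "v n = 0" using True v by (auto simp: Vspan_def)
    ultimately show ?thesis using True by (simp add: w_def algebra_simps)
  qed (simp add: a_def w_def Tmap_Tlift)
  then show "v = (\<lambda>n. Tmap a n + of_nat l * w n)" by auto
qed

lemma Tmap_eq_mod_l:
  assumes g: "(g :: nat \<Rightarrow> 'a) \<in> FR"
  shows "\<exists>a\<in>Vspan l. \<exists>h\<in>FR. Tmap g = (\<lambda>n. Tmap a n + of_nat l * h n)"
proof -
  define g' where "g' = (\<lambda>n. if l dvd n then 0 else g n)"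
  define v where "v = (\<lambda>n. if \<not> l dvd n \<and> l dvd (n - 1) then of_nat n * g (n - 1) else (0::'a))"
  define w where "w = (\<lambda>n. if l dvd n then of_nat (n div l) * g n else (0::'a))"
  have g'_in: "g' \<in> Vspan l"
    using g unfolding Vspan_iff FR_def g'_def by (auto intro: rev_finite_subset[of "{n. g n \<noteq> 0}"])
  have "v \<in> FR" unfolding v_def using g by (rule FR_shift)
  then have "v \<in> Vspan l" by (simp add: Vspan_iff v_def)
  then obtain a' w' where a': "a' \<in> Vspan l" and w': "w' \<in> FR"
    and v_eq: "v = (\<lambda>n. Tmap a' n + of_nat l * w' n)"
    using Vspan_eq_Tmap_mod_l by blast
  have w_in: "w \<in> FR"
    using g unfolding FR_def w_def by (auto intro: rev_finite_subset[of "{n. g n \<noteq> 0}"])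
  \<comment> \<open>The coefficient \<open>g n\<close> at a multiple \<open>n\<close> of \<open>l\<close> contributes \<open>n * g n \<in> l R\<close> at \<open>n\<close>
    and \<open>v (n + 1)\<close> at \<open>n + 1\<close>, which lies in \<open>Vspan l\<close>.\<close>
  have split: "Tmap g n = Tmap g' n + v n + of_nat l * w n" for n
  proof (cases "n \<noteq> 0 \<and> l dvd n")
    case True
    have "\<not> l dvd (n - 1)"
    proof
      assume "l dvd (n - 1)"
      with True have "l dvd n - (n - 1)" using dvd_diff_nat by blast
      with True have "l dvd 1" by simp
      with l_prime show False by simp
    qed
    moreover have "(of_nat n :: 'a) = of_nat l * of_nat (n div l)"
      using True by (metis dvd_mult_div_cancel of_nat_mult)
    ultimately show ?thesis using True by (simp add: Tmap_def g'_def v_def w_def)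
  next
    case False
    then show ?thesis by (auto simp: Tmap_def g'_def v_def w_def)
  qed
  show ?thesis
  proof (intro bexI)
    show "(\<lambda>n. g' n + a' n) \<in> Vspan l" using g'_in a' by (rule Vspan_add)
    show "(\<lambda>n. w' n + w n) \<in> FR" using w' w_in by (rule FR_add)
    show "Tmap g = (\<lambda>n. Tmap (\<lambda>n. g' n + a' n) n + of_nat l * (w' n + w n))"
      unfolding Tmap_add fun_eq_iff split using v_eq by (simp add: algebra_simps fun_eq_iff)
  qed
qed

lemma funpow_Tmap_eq_mod_l:
  assumes g: "(g :: nat \<Rightarrow> 'a) \<in> FR"
  shows "\<exists>N\<ge>j. \<exists>a\<in>Vspan l. \<exists>h\<in>FR. (Tmap ^^ (N - j)) g = (\<lambda>n. (Tmap ^^ N) a n + of_nat l * h n)"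
proof (induction j)
  case 0
  from Tmap_eq_mod_l[OF g] show ?case by (intro exI[of _ 1]) auto
next
  case (Suc j)
  then obtain N a h where N: "j \<le> N" and a: "a \<in> Vspan l" and h: "h \<in> FR"
    and eq: "(Tmap ^^ (N - j)) g = (\<lambda>n. (Tmap ^^ N) a n + of_nat l * h n)" by blast
  obtain a' w where a': "a' \<in> Vspan l" and w: "w \<in> FR"
    and a_eq: "a = (\<lambda>n. Tmap a' n + of_nat l * w n)"
    using Vspan_eq_Tmap_mod_l[OF a] by blast
  have "(Tmap ^^ (Suc N - Suc j)) g = (\<lambda>n. (Tmap ^^ N) (Tmap a') n + of_nat l * ((Tmap ^^ N) w n + h n))"
    unfolding diff_Suc_Suc eq a_eq funpow_Tmap_add funpow_Tmap_mult by (simp add: algebra_simps)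
  also have "(Tmap ^^ N) (Tmap a') = (Tmap ^^ Suc N) a'" by (simp add: funpow_swap1)
  finally have "(Tmap ^^ (Suc N - Suc j)) g
      = (\<lambda>n. (Tmap ^^ Suc N) a' n + of_nat l * ((Tmap ^^ N) w n + h n))" .
  moreover have "(\<lambda>n. (Tmap ^^ N) w n + h n) \<in> FR" using w h by (intro FR_add funpow_Tmap_in_FR)
  moreover have "Suc j \<le> Suc N" using N by simp
  ultimately show ?case using a'
    by (intro exI[of _ "Suc N"] conjI bexI[of _ a'] bexI[of _ "\<lambda>n. (Tmap ^^ N) w n + h n"])
qed

lemma funpow_Tmap_power_mult_into_Vspan:
  assumes "(g :: nat \<Rightarrow> 'a) \<in> FR" and "e \<le> \<nu>"
  shows "\<exists>N\<ge>j. \<exists>a\<in>Vspan l. (Tmap ^^ (N - j)) (\<lambda>n. of_nat l ^ (\<nu> - e) * g n) = (Tmap ^^ N) a"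
  using assms
proof (induction e arbitrary: g j)
  case 0
  have "(of_nat l ^ \<nu> :: 'a) = 0" using l_power_eq_0 by (simp add: of_nat_power)
  then show ?case using Vspan_zero[of l]
    by (intro exI[of _ j] conjI bexI[of _ "\<lambda>n. 0"]) (simp_all add: funpow_Tmap_zero)
next
  case (Suc e)
  define p where "p = \<nu> - Suc e"
  have p: "of_nat l ^ p * of_nat l = (of_nat l ^ (\<nu> - e) :: 'a)"
    using Suc.prems(2) by (simp add: p_def Suc_diff_Suc power_Suc2[symmetric])
  obtain N a h where N: "j \<le> N" and a: "a \<in> Vspan l" and h: "h \<in> FR"
    and eq: "(Tmap ^^ (N - j)) g = (\<lambda>n. (Tmap ^^ N) a n + of_nat l * h n)"
    using funpow_Tmap_eq_mod_l[OF Suc.prems(1)] by blast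
  obtain N' a' where N': "N \<le> N'" and a': "a' \<in> Vspan l"
    and eq': "(Tmap ^^ (N' - N)) (\<lambda>n. of_nat l ^ (\<nu> - e) * h n) = (Tmap ^^ N') a'"
    using Suc.IH[OF h] Suc.prems(2) by fastforce
  have "(Tmap ^^ (N' - j)) g = (Tmap ^^ (N' - N)) ((Tmap ^^ (N - j)) g)"
    using N N' by (rule funpow_diff_split)
  also have "\<dots> = (\<lambda>n. (Tmap ^^ N') a n + of_nat l * (Tmap ^^ (N' - N)) h n)"
    using funpow_diff_split[of 0 N N' Tmap a] N' by (simp add: eq funpow_Tmap_add funpow_Tmap_mult)
  finally have "(Tmap ^^ (N' - j)) (\<lambda>n. of_nat l ^ p * g n)
      = (\<lambda>n. of_nat l ^ p * ((Tmap ^^ N') a n + of_nat l * (Tmap ^^ (N' - N)) h n))"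
    by (simp add: funpow_Tmap_mult)
  also have "\<dots> = (\<lambda>n. (Tmap ^^ N') (\<lambda>n. of_nat l ^ p * a n) n
          + (Tmap ^^ (N' - N)) (\<lambda>n. of_nat l ^ (\<nu> - e) * h n) n)"
    unfolding funpow_Tmap_mult p[symmetric] by (simp add: algebra_simps)
  also have "\<dots> = (Tmap ^^ N') (\<lambda>n. of_nat l ^ p * a n + a' n)"
    by (simp add: eq' funpow_Tmap_add)
  finally have "(Tmap ^^ (N' - j)) (\<lambda>n. of_nat l ^ p * g n)
      = (Tmap ^^ N') (\<lambda>n. of_nat l ^ p * a n + a' n)" .
  moreover have "(\<lambda>n. of_nat l ^ p * a n + a' n) \<in> Vspan l" using a a' by (intro Vspan_add Vspan_mult)
  moreover have "j \<le> N'" using N N' by simp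
  ultimately show ?case unfolding p_def by blast
qed

lemma funpow_Tmap_into_Vspan:
  assumes "(g :: nat \<Rightarrow> 'a) \<in> FR"
  shows "\<exists>N\<ge>j. \<exists>a\<in>Vspan l. (Tmap ^^ (N - j)) g = (Tmap ^^ N) a"
  using funpow_Tmap_power_mult_into_Vspan[OF assms order_refl] by simp

lemma funpow_Tmap_Vspan_eq_0:
  assumes a: "(a :: nat \<Rightarrow> 'a) \<in> Vspan l" and zero: "(Tmap ^^ m) a = (\<lambda>n. 0)"
  shows "a = (\<lambda>n. 0)"
proof (rule ccontr)
  assume "a \<noteq> (\<lambda>n. 0)"
  then have ex: "\<exists>n. a n \<noteq> 0" by auto
  define N where "N = (LEAST n. a n \<noteq> 0)"
  have aN: "a N \<noteq> 0" unfolding N_def using ex by (rule LeastI_ex)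
  have below: "\<forall>n<N. a n = 0" unfolding N_def using not_less_Least by blast
  have N: "0 < N" "\<not> l dvd N" using aN a by (auto simp: Vspan_def)
  have "of_nat N ^ m * a N = 0"
    using funpow_Tmap_lowest_coeff[OF N(1) below, of m] zero by simp
  then have "(nat_inverse N * of_nat N) ^ m * a N = 0"
    by (simp add: power_mult_distrib mult.assoc)
  then show False using aN nat_inverse_mult_if_not_dvd[OF N(2)] by simp
qed

lemma bij_betw_hclass_Vspan: "bij_betw (\<lambda>a :: nat \<Rightarrow> 'a. hclass 0 a) (Vspan l) HR"
proof (rule bij_betw_imageI)
  show "inj_on (\<lambda>a :: nat \<Rightarrow> 'a. hclass 0 a) (Vspan l)"
  proof (rule inj_onI)
    fix a b :: "nat \<Rightarrow> 'a"
    assume a: "a \<in> Vspan l" and b: "b \<in> Vspan l" and ab: "hclass 0 a = hclass 0 b"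
    have "a \<in> FR" "b \<in> FR" using a b Vspan_subset_FR by auto
    with ab obtain m where eq: "(Tmap ^^ m) a = (Tmap ^^ m) b"
      by (auto simp: hclass_eq_iff)
    have "(Tmap ^^ m) (\<lambda>n. a n - b n) = (\<lambda>n. (Tmap ^^ m) a n - (Tmap ^^ m) b n)"
      by (rule funpow_Tmap_diff)
    also have "\<dots> = (\<lambda>n. 0)" unfolding eq by simp
    finally have "(Tmap ^^ m) (\<lambda>n. a n - b n) = (\<lambda>n. 0)" .
    then have "(\<lambda>n. a n - b n) = (\<lambda>n. 0)"
      using Vspan_diff[OF a b] funpow_Tmap_Vspan_eq_0 by blast
    then show "a = b" by (simp add: fun_eq_iff)
  qed
  show "(\<lambda>a :: nat \<Rightarrow> 'a. hclass 0 a) ` Vspan l = HR"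
  proof
    show "(\<lambda>a :: nat \<Rightarrow> 'a. hclass 0 a) ` Vspan l \<subseteq> HR"
      using Vspan_subset_FR hclass_in_HR by blast
    show "HR \<subseteq> (\<lambda>a :: nat \<Rightarrow> 'a. hclass 0 a) ` Vspan l"
    proof
      fix X :: "(nat \<times> (nat \<Rightarrow> 'a)) set"
      assume "X \<in> HR"
      then obtain j g where g: "g \<in> FR" and X: "X = hclass j g" by (rule HR_cases)
      obtain N a where "j \<le> N" "a \<in> Vspan l" "(Tmap ^^ (N - j)) g = (Tmap ^^ (N - 0)) a"
        using funpow_Tmap_into_Vspan[OF g, of j] by auto
      then have "X = hclass 0 a" using g Vspan_subset_FR unfolding X by (subst hclass_eq_iff) auto
      then show "X \<in> (\<lambda>a. hclass 0 a) ` Vspan l" using \<open>a \<in> Vspan l\<close> by blast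
    qed
  qed
qed

end

definition block_coeffs :: "nat \<Rightarrow> (nat \<Rightarrow> nat \<Rightarrow> 'a::comm_ring_1) \<Rightarrow> nat \<Rightarrow> 'a" where
  "block_coeffs l c n = (if l dvd n then 0 else c (n div l) (n mod l))"

definition coeff_blocks :: "nat \<Rightarrow> (nat \<Rightarrow> 'a::comm_ring_1) \<Rightarrow> nat \<Rightarrow> nat \<Rightarrow> 'a" where
  "coeff_blocks l a k i = (if 1 \<le> i \<and> i \<le> l - 1 then a (k * l + i) else 0)"

lemma phiF_eq:
  assumes "0 < l"
  shows "phiF l k v n = (if k = n div l \<and> \<not> l dvd n then v (n mod l) else 0)"
proof -
  have "k * l < n \<and> n < (k + 1) * l \<longleftrightarrow> k = n div l \<and> n mod l \<noteq> 0"
  proof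
    assume *: "k * l < n \<and> n < (k + 1) * l"
    then have "n div l = k" by (intro div_nat_eqI) (auto simp: algebra_simps)
    with * show "k = n div l \<and> n mod l \<noteq> 0" by (metis div_mult_mod_eq add_0_right less_irrefl)
  next
    assume *: "k = n div l \<and> n mod l \<noteq> 0"
    have "n mod l < l" using assms by simp
    with * show "k * l < n \<and> n < (k + 1) * l"
      by (metis div_mult_mod_eq add_less_cancel_left add.commute mult_Suc gr0I
          less_add_same_cancel1 Suc_eq_plus1)
  qed
  moreover have "n - n div l * l = n mod l" by (simp add: minus_div_mult_eq_mod)
  ultimately show ?thesis unfolding phiF_def by (auto simp: dvd_eq_mod_eq_0)
qed

lemma Phi_eq_hclass_block_coeffs:
  assumes "0 < l" and "c \<in> DSum l"
  shows "Phi l c = hclass 0 (block_coeffs l c)"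
proof -
  let ?K = "{k. c k \<noteq> (\<lambda>_. 0)}"
  have "(\<Sum>k\<in>?K. phiF l k (c k) n) = block_coeffs l c n" for n
  proof -
    have "(\<Sum>k\<in>?K. phiF l k (c k) n)
        = (\<Sum>k\<in>?K. if n div l = k then (if l dvd n then 0 else c k (n mod l)) else 0)"
      by (rule sum.cong) (auto simp: phiF_eq[OF assms(1)])
    also have "\<dots> = block_coeffs l c n"
      using assms(2) by (subst sum.delta') (auto simp: DSum_def block_coeffs_def)
    finally show ?thesis .
  qed
  then show ?thesis unfolding Phi_def by simp
qed

lemma block_coeffs_add:
  "block_coeffs l (\<lambda>k i. c k i + d k i) = (\<lambda>n. block_coeffs l c n + block_coeffs l d n)"
  by (simp add: block_coeffs_def fun_eq_iff)

lemma block_coeffs_mult: "block_coeffs l (\<lambda>k i. r * c k i) = (\<lambda>n. r * block_coeffs l c n)"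
  by (simp add: block_coeffs_def fun_eq_iff)

lemma DSum_add: "c \<in> DSum l \<Longrightarrow> d \<in> DSum l \<Longrightarrow> (\<lambda>k i. c k i + d k i) \<in> DSum l"
  unfolding DSum_def Lmod_def
  by (auto intro: rev_finite_subset[of "{k. c k \<noteq> (\<lambda>_. 0)} \<union> {k. d k \<noteq> (\<lambda>_. 0)}"])
    (metis add.left_neutral)+

lemma DSum_mult: "c \<in> DSum l \<Longrightarrow> (\<lambda>k i. r * c k i) \<in> DSum l"
  unfolding DSum_def Lmod_def
  by (auto intro: rev_finite_subset[of "{k. c k \<noteq> (\<lambda>_. 0)}"]) (metis mult_zero_right)+

lemma block_index:
  fixes k i l :: nat
  assumes "0 < i" "i < l"
  shows "(k * l + i) div l = k" "(k * l + i) mod l = i" "\<not> l dvd k * l + i"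
proof -
  show "(k * l + i) div l = k" using assms by simp
  show "(k * l + i) mod l = i" using assms by simp
  then show "\<not> l dvd k * l + i" using assms by (simp add: dvd_eq_mod_eq_0)
qed

lemma coeff_blocks_block_coeffs:
  assumes "c \<in> DSum l"
  shows "coeff_blocks l (block_coeffs l c) = c"
proof (intro ext)
  fix k i
  show "coeff_blocks l (block_coeffs l c) k i = c k i"
  proof (cases "1 \<le> i \<and> i \<le> l - 1")
    case True
    then have "0 < i" "i < l" by auto
    then show ?thesis using True block_index[of i l k] by (simp add: coeff_blocks_def block_coeffs_def)
  next
    case False
    then show ?thesis using assms by (auto simp: coeff_blocks_def DSum_def Lmod_def)
  qed
qed

lemma block_coeffs_coeff_blocks:
  assumes "0 < l" "a \<in> Vspan l"
  shows "block_coeffs l (coeff_blocks l a) = a"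
proof (intro ext)
  fix n
  show "block_coeffs l (coeff_blocks l a) n = a n"
  proof (cases "l dvd n")
    case True
    then show ?thesis using assms(2) by (simp add: block_coeffs_def Vspan_iff)
  next
    case False
    then have "1 \<le> n mod l" "n mod l \<le> l - 1"
      using assms(1) mod_less_divisor[OF assms(1), of n] by (auto simp: dvd_eq_mod_eq_0)
    then show ?thesis using False by (simp add: block_coeffs_def coeff_blocks_def)
  qed
qed

lemma block_coeffs_in_Vspan:
  assumes "0 < l" "c \<in> DSum l"
  shows "block_coeffs l c \<in> Vspan l"
proof -
  obtain B where B: "\<And>k. c k \<noteq> (\<lambda>_. 0) \<Longrightarrow> k < B"
    using assms(2) by (auto simp: DSum_def finite_nat_set_iff_bounded)
  have "{n. block_coeffs l c n \<noteq> 0} \<subseteq> {..<B * l}"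
  proof
    fix n assume "n \<in> {n. block_coeffs l c n \<noteq> 0}"
    then have "n div l < B" by (intro B) (auto simp: block_coeffs_def split: if_splits)
    then show "n \<in> {..<B * l}" using assms(1) by (simp add: div_less_iff_less_mult)
  qed
  then have "finite {n. block_coeffs l c n \<noteq> 0}" by (rule finite_subset) simp
  then show ?thesis by (simp add: Vspan_iff FR_def block_coeffs_def)
qed

lemma coeff_blocks_in_DSum:
  assumes "a \<in> FR"
  shows "coeff_blocks l a \<in> DSum l"
proof -
  have "{k. coeff_blocks l a k \<noteq> (\<lambda>_. 0)} \<subseteq> (\<lambda>n. n div l) ` {n. a n \<noteq> 0}"
  proof
    fix k assume "k \<in> {k. coeff_blocks l a k \<noteq> (\<lambda>_. 0)}"
    then obtain i where i: "1 \<le> i \<and> i \<le> l - 1" and "a (k * l + i) \<noteq> 0"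
      by (auto simp: coeff_blocks_def fun_eq_iff split: if_splits)
    moreover from i have "0 < i" "i < l" by auto
    then have "k = (k * l + i) div l" by (simp add: block_index)
    ultimately show "k \<in> (\<lambda>n. n div l) ` {n. a n \<noteq> 0}" by blast
  qed
  then have "finite {k. coeff_blocks l a k \<noteq> (\<lambda>_. 0)}"
    using assms by (auto simp: FR_def intro: finite_subset)
  then show ?thesis by (auto simp: DSum_def Lmod_def coeff_blocks_def)
qed

lemma bij_betw_block_coeffs:
  assumes "0 < l"
  shows "bij_betw (block_coeffs l :: _ \<Rightarrow> nat \<Rightarrow> 'a::comm_ring_1) (DSum l) (Vspan l)"
proof (rule bij_betw_byWitness[where f' = "coeff_blocks l"])
  show "\<forall>c\<in>DSum l. coeff_blocks l (block_coeffs l c) = c"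
    by (simp add: coeff_blocks_block_coeffs)
  show "\<forall>a\<in>Vspan l. block_coeffs l (coeff_blocks l a) = a"
    using assms by (simp add: block_coeffs_coeff_blocks)
  show "block_coeffs l ` DSum l \<subseteq> Vspan l"
    using assms by (auto intro: block_coeffs_in_Vspan)
  show "coeff_blocks l ` Vspan l \<subseteq> DSum l"
    using Vspan_subset_FR by (auto intro: coeff_blocks_in_DSum)
qed

theorem theorem2p5:
  fixes l \<nu> :: nat
  assumes "prime l" and "\<nu> \<ge> 1"
    and "(of_nat (l ^ \<nu>) :: 'a::comm_ring_1) = 0"
  shows "bij_betw (Phi l :: (nat \<Rightarrow> nat \<Rightarrow> 'a) \<Rightarrow> _) (DSum l) HR
       \<and> (\<forall>c::nat \<Rightarrow> nat \<Rightarrow> 'a\<in>DSum l. \<forall>d\<in>DSum l. Phi l (\<lambda>k i. c k i + d k i) = hadd (Phi l c) (Phi l d))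
       \<and> (\<forall>c::nat \<Rightarrow> nat \<Rightarrow> 'a\<in>DSum l. \<forall>r::'a. Phi l (\<lambda>k i. r * c k i) = hscale r (Phi l c))
       \<and> bij_betw (\<lambda>a::nat \<Rightarrow> 'a. hclass 0 a)
           {a. finite {n. a n \<noteq> 0} \<and> (\<forall>n. a n \<noteq> 0 \<longrightarrow> 0 < n \<and> \<not> l dvd n)} HR"
proof -
  have l: "0 < l" using assms(1) by (rule prime_gt_0_nat)
  have V: "bij_betw (\<lambda>a::nat \<Rightarrow> 'a. hclass 0 a) (Vspan l) HR"
    using assms(1,3) by (rule bij_betw_hclass_Vspan)
  have blocks: "bij_betw (block_coeffs l :: _ \<Rightarrow> nat \<Rightarrow> 'a) (DSum l) (Vspan l)"
    using l by (rule bij_betw_block_coeffs)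
  then have coeffs_FR: "block_coeffs l c \<in> FR" if "c \<in> DSum l" for c :: "nat \<Rightarrow> nat \<Rightarrow> 'a"
    using that Vspan_subset_FR by (auto simp: bij_betw_def)
  have "bij_betw ((\<lambda>a. hclass 0 a) \<circ> block_coeffs l) (DSum l) (HR :: (nat \<times> (nat \<Rightarrow> 'a)) set set)"
    using blocks V by (rule bij_betw_trans)
  then have "bij_betw (Phi l :: (nat \<Rightarrow> nat \<Rightarrow> 'a) \<Rightarrow> _) (DSum l) HR"
    by (rule bij_betw_cong[THEN iffD1, rotated]) (simp add: Phi_eq_hclass_block_coeffs[OF l])
  moreover have "Phi l (\<lambda>k i. c k i + d k i) = hadd (Phi l c) (Phi l d)"
    if "c \<in> DSum l" "d \<in> DSum l" for c d :: "nat \<Rightarrow> nat \<Rightarrow> 'a"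
    using that by (simp add: Phi_eq_hclass_block_coeffs[OF l] DSum_add block_coeffs_add
        hadd_hclass coeffs_FR)
  moreover have "Phi l (\<lambda>k i. r * c k i) = hscale r (Phi l c)"
    if "c \<in> DSum l" for c :: "nat \<Rightarrow> nat \<Rightarrow> 'a" and r
    using that by (simp add: Phi_eq_hclass_block_coeffs[OF l] DSum_mult block_coeffs_mult
        hscale_hclass coeffs_FR)
  ultimately show ?thesis using V by (simp add: Vspan_def)
qed

end
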